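(* Let $q\le k$ and $\alpha\ge1$. Any outcome in the $\alpha$-$q$-core satisfies $(2\alpha+1)$-$q$-individual fairness if $N\subseteq C$ and $k\le n$, and is in the $\left(\gamma,\frac{\gamma(\alpha+1)}{\gamma-1}\right)$-$q$-transferable core restricted to $\ell<2q$, for every $\gamma>1$. Further, if $N\subseteq C$ and $k\le n$, any outcome satisfying $\beta$-$q$-individual fairness is in the $2\beta$-$q$-core.
   Context: Let $(\mathcal X,d)$ be a metric space, $N=[n]$ a set of agents and $C$ a set of candidates located in $\mathcal X$, $k\in\mathbb N^+$; an outcome is $W\subseteq C$ with $|W|\le k$; $B(i,r)=\{x\in\mathcal X:d(i,x)\le r\}$. For a set $W$ and $q\le|W|$, $d^q(i,W)$ denotes the distance from $i$ to its $q$-th closest point of $W$ (so $|\{c\in W: d(i,c)\le d^q(i,W)\}|\ge q$ counted with the $q$ closest). $\alpha$-$q$-core: $W$ is in it if there are no $\ell\in\mathbb N$, no $N'\subseteq N$ with $|N'|\ge\ell n/k$, and no $C'\subseteq C$ with $q\le|C'|\le\ell$ such that $\alpha\,d^q(i,C')<d^q(i,W)$ for all $i\in N'$. $\beta$-$q$-individual fairness (for instances with $N\subseteq C$ and $k\le n$): $d^q(i,W)\le\beta\,r^q(i)$ for all $i\in N$, where $r^q(i)=\min\{r\in\mathbb R:|B(i,r)\cap N|\ge qn/k\}$. $(\gamma,\alpha)$-$q$-transferable core restricted to $\ell<2q$: there are no $\ell\in\mathbb N$ with $\ell<2q$, no $N'\subseteq N$ with $|N'|\ge\gamma\ell n/k$,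 and no $C'\subseteq C$ with $q\le|C'|\le\ell$ such that $\alpha\sum_{i\in N'}d^q(i,C')<\sum_{i\in N'}d^q(i,W)$. *)

theory Defs
  imports "HOL-Analysis.Analysis" "HOL-Library.Multiset"
begin

text \<open>Agents and candidates are abstract entities of type 'e, located in a metric
space 'a via loc. N is the set of agents, C the set of candidates.\<close>

definition dloc :: "('e \<Rightarrow> 'a::metric_space) \<Rightarrow> 'e \<Rightarrow> 'e \<Rightarrow> real" where
  "dloc loc i c = dist (loc i) (loc c)"

text \<open>q-th closest distance from i to W (meaningful for 1 <= q <= card W, W finite).\<close>
definition dq :: "('e \<Rightarrow> 'a::metric_space) \<Rightarrow> nat \<Rightarrow> 'e \<Rightarrow> 'e set \<Rightarrow> real" where
  "dq loc q i W = sorted_list_of_multiset (image_mset (\<lambda>c. dloc loc i c) (mset_set W)) ! (q - 1)"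

definition outcome :: "'e set \<Rightarrow> nat \<Rightarrow> 'e set \<Rightarrow> bool" where
  "outcome C k W \<longleftrightarrow> W \<subseteq> C \<and> card W \<le> k"

definition in_core ::
  "('e \<Rightarrow> 'a::metric_space) \<Rightarrow> 'e set \<Rightarrow> 'e set \<Rightarrow> nat \<Rightarrow> nat \<Rightarrow> real \<Rightarrow> 'e set \<Rightarrow> bool" where
  "in_core loc N C k q \<alpha> W \<longleftrightarrow>
     \<not> (\<exists>(l::nat) N' C'. N' \<subseteq> N \<and> real (card N') \<ge> real l * real (card N) / real k \<and>
           C' \<subseteq> C \<and> q \<le> card C' \<and> card C' \<le> l \<and>
           (\<forall>i\<in>N'. \<alpha> * dq loc q i C' < dq loc q i W))"

definition rq :: "('e \<Rightarrow> 'a::metric_space) \<Rightarrow> 'e set \<Rightarrow> nat \<Rightarrow> nat \<Rightarrow> 'e \<Rightarrow> real" where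
  "rq loc N k q i = (LEAST r::real. real (card {j\<in>N. dloc loc i j \<le> r}) \<ge> real q * real (card N) / real k)"

definition individually_fair ::
  "('e \<Rightarrow> 'a::metric_space) \<Rightarrow> 'e set \<Rightarrow> nat \<Rightarrow> nat \<Rightarrow> real \<Rightarrow> 'e set \<Rightarrow> bool" where
  "individually_fair loc N k q \<beta> W \<longleftrightarrow> (\<forall>i\<in>N. dq loc q i W \<le> \<beta> * rq loc N k q i)"

definition in_transferable_core_restr ::
  "('e \<Rightarrow> 'a::metric_space) \<Rightarrow> 'e set \<Rightarrow> 'e set \<Rightarrow> nat \<Rightarrow> nat \<Rightarrow> real \<Rightarrow> real \<Rightarrow> 'e set \<Rightarrow> bool" where
  "in_transferable_core_restr loc N C k q \<gamma> \<alpha> W \<longleftrightarrow>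
     \<not> (\<exists>(l::nat) N' C'. l < 2 * q \<and> N' \<subseteq> N \<and>
           real (card N') \<ge> \<gamma> * real l * real (card N) / real k \<and>
           C' \<subseteq> C \<and> q \<le> card C' \<and> card C' \<le> l \<and>
           \<alpha> * (\<Sum>i\<in>N'. dq loc q i C') < (\<Sum>i\<in>N'. dq loc q i W))"

end

theory Submission
  imports Defs
begin

text \<open>
  Both distances in the statement are order statistics: \<open>dq loc q i W\<close> is the \<open>q\<close>-th smallest
  distance from \<open>i\<close> to \<open>W\<close>, and the radius \<open>rq loc N k q i\<close> is the \<open>\<lceil>q n / k\<rceil>\<close>-th smallest
  distance from \<open>i\<close> to the agents, so \<open>rq i \<le> x\<close> exactly when the ball of radius \<open>x\<close> around
  \<open>i\<close> holds \<open>q n / k\<close> agents. In particular \<open>dq\<close> is 1-Lipschitz in the agent.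

  Core implies fairness: if \<open>dq i W > (2\<alpha> + 1) rq i\<close>, the \<open>q n / k\<close> agents of the ball of
  radius \<open>rq i\<close> around \<open>i\<close> block with \<open>q\<close> of themselves, all within \<open>2 rq i\<close> of each of them.

  Core implies the restricted transferable core: with fewer than \<open>2 q\<close> deviating candidates,
  the \<open>q\<close> closest ones of any two agents overlap, so an agent gaining more than the factor
  \<open>\<alpha>\<close> costs under \<open>W\<close> at most its deviation cost plus \<open>(\<alpha> + 1) m\<close>, where \<open>m\<close> is the
  smallest deviation cost of a non-gaining agent. By the core property fewer than a \<open>1/\<gamma>\<close>
  fraction of the deviators gain, and the non-gaining ones, each costing at least \<open>m\<close>, pay
  for them.

  Fairness implies core: by double counting, some deviating candidate \<open>c\<close> is among the \<open>q\<close>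
  closest of at least \<open>q n / k\<close> deviators; the one farthest from \<open>c\<close> sees all of them within
  twice its own \<open>dq\<close>, which bounds its radius.
\<close>

definition kth_smallest :: "nat \<Rightarrow> ('a \<Rightarrow> 'b::linorder) \<Rightarrow> 'a set \<Rightarrow> 'b" where
  "kth_smallest m f W = sorted_list_of_multiset (image_mset f (mset_set W)) ! (m - 1)"

lemma sorted_nth_le_iff_length_filter:
  fixes xs :: "'a::linorder list"
  assumes "sorted xs" "0 < m" "m \<le> length xs"
  shows "xs ! (m - 1) \<le> x \<longleftrightarrow> m \<le> length (filter (\<lambda>y. y \<le> x) xs)"
proof
  assume le_x: "xs ! (m - 1) \<le> x"
  have "xs ! i \<le> x" if "i < m" for i
  proof -
    have "xs ! i \<le> xs ! (m - 1)"
      using assms that by (intro sorted_nth_mono) auto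
    then show ?thesis using le_x by (rule order_trans)
  qed
  then have "{0..<m} \<subseteq> {i. i < length xs \<and> xs ! i \<le> x}"
    using assms(3) by auto
  from card_mono[OF _ this] show "m \<le> length (filter (\<lambda>y. y \<le> x) xs)"
    by (simp add: length_filter_conv_card)
next
  assume m_le: "m \<le> length (filter (\<lambda>y. y \<le> x) xs)"
  show "xs ! (m - 1) \<le> x"
  proof (rule ccontr)
    assume "\<not> xs ! (m - 1) \<le> x"
    then have "i < m - 1" if "i < length xs" "xs ! i \<le> x" for i
      using sorted_nth_mono[OF assms(1), of "m - 1" i] that by (metis not_less order_trans)
    then have "{i. i < length xs \<and> xs ! i \<le> x} \<subseteq> {0..<m - 1}"
      by auto
    from card_mono[OF _ this] show False
      using m_le assms(2) by (simp add: length_filter_conv_card)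
  qed
qed

lemma length_filter_sorted_image_mset:
  assumes "finite W"
  shows "length (filter P (sorted_list_of_multiset (image_mset f (mset_set W)))) = card {c\<in>W. P (f c)}"
proof -
  have "length (filter P (sorted_list_of_multiset (image_mset f (mset_set W))))
      = size (filter_mset P (image_mset f (mset_set W)))"
    by (metis mset_filter mset_sorted_list_of_multiset size_mset)
  also have "\<dots> = card {c\<in>W. P (f c)}"
    using assms by (simp add: filter_mset_image_mset filter_mset_mset_set)
  finally show ?thesis .
qed

lemma kth_smallest_le_iff:
  assumes "finite W" "0 < m" "m \<le> card W"
  shows "kth_smallest m f W \<le> x \<longleftrightarrow> m \<le> card {c\<in>W. f c \<le> x}"
proof -
  let ?xs = "sorted_list_of_multiset (image_mset f (mset_set W))"
  have "length ?xs = card W"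
    using length_filter_sorted_image_mset[OF assms(1), of "\<lambda>_. True" f] by simp
  then show ?thesis
    unfolding kth_smallest_def
    using assms sorted_nth_le_iff_length_filter[of ?xs m x]
    by (simp add: length_filter_sorted_image_mset)
qed

lemma Least_card_sublevel_eq_kth_smallest:
  fixes f :: "'a \<Rightarrow> 'b::linorder" and t :: real
  assumes "finite N" "0 < t" "t \<le> real (card N)"
  shows "(LEAST r. t \<le> real (card {j\<in>N. f j \<le> r})) = kth_smallest (nat \<lceil>t\<rceil>) f N"
proof -
  have "t \<le> real (card {j\<in>N. f j \<le> r}) \<longleftrightarrow> kth_smallest (nat \<lceil>t\<rceil>) f N \<le> r" for r
    using assms by (subst kth_smallest_le_iff) auto
  then show ?thesis
    by (intro Least_equality) auto
qed

lemma pigeonhole_incidence: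
  assumes "finite A" "finite B" "B \<noteq> {}"
    and "\<And>a. a \<in> A \<Longrightarrow> T a \<subseteq> B" "\<And>a. a \<in> A \<Longrightarrow> q \<le> card (T a)"
  shows "\<exists>b\<in>B. q * card A \<le> card B * card {a\<in>A. b \<in> T a}"
proof (rule ccontr)
  assume "\<not> ?thesis"
  then have less: "card B * card {a\<in>A. b \<in> T a} < q * card A" if "b \<in> B" for b
    using that by (simp add: not_le)
  have "(\<Sum>b\<in>B. card {a\<in>A. b \<in> T a}) = (\<Sum>b\<in>B. \<Sum>a\<in>A. if b \<in> T a then 1 else 0)"
    using assms(1) by (simp add: sum.inter_filter[symmetric])
  also have "\<dots> = (\<Sum>a\<in>A. \<Sum>b\<in>B. if b \<in> T a then 1 else 0)"
    by (rule sum.swap)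
  also have "\<dots> = (\<Sum>a\<in>A. card {b\<in>B. b \<in> T a})"
    using assms(2) by (simp add: sum.inter_filter[symmetric])
  also have "\<dots> = (\<Sum>a\<in>A. card (T a))"
    using assms(4) by (intro sum.cong refl arg_cong[where f = card]) blast
  also have "\<dots> \<ge> q * card A"
    using sum_mono[of A "\<lambda>_. q" "\<lambda>a. card (T a)"] assms(5) by (simp add: mult.commute)
  finally have "card B * (q * card A) \<le> (\<Sum>b\<in>B. card B * card {a\<in>A. b \<in> T a})"
    by (simp add: sum_distrib_left[symmetric])
  also have "\<dots> < (\<Sum>b\<in>B. q * card A)"
    using assms(2,3) less by (intro sum_strict_mono) auto
  finally show False by simp
qed

lemma sum_le_transfer_factor:
  fixes w c :: "'a \<Rightarrow> real"
  assumes "finite S" "finite G" "S \<inter> G = {}" "1 < \<gamma>" "0 \<le> \<alpha>" "0 \<le> m"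
    and "(\<gamma> - 1) * real (card S) \<le> real (card G)"
    and "\<And>i. i \<in> S \<Longrightarrow> 0 \<le> c i" "\<And>i. i \<in> S \<Longrightarrow> w i \<le> c i + (\<alpha> + 1) * m"
    and "\<And>j. j \<in> G \<Longrightarrow> m \<le> c j" "\<And>j. j \<in> G \<Longrightarrow> w j \<le> \<alpha> * c j"
  shows "sum w (S \<union> G) \<le> \<gamma> * (\<alpha> + 1) / (\<gamma> - 1) * sum c (S \<union> G)"
proof -
  define \<delta> where "\<delta> = (\<alpha> + 1) / (\<gamma> - 1)"
  have "0 \<le> \<delta>" "(\<gamma> - 1) * \<delta> = \<alpha> + 1" "\<gamma> * (\<alpha> + 1) / (\<gamma> - 1) = \<alpha> + 1 + \<delta>"
    using assms(4,5) by (simp_all add: \<delta>_def field_simps)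
  have "sum w S \<le> sum c S + real (card S) * (\<alpha> + 1) * m"
    using sum_mono[of S w "\<lambda>i. c i + (\<alpha> + 1) * m"] assms(9) by (simp add: sum.distrib)
  also have "real (card S) * (\<alpha> + 1) * m = \<delta> * ((\<gamma> - 1) * real (card S) * m)"
    unfolding \<open>(\<gamma> - 1) * \<delta> = \<alpha> + 1\<close>[symmetric] by (simp only: ac_simps)
  also have "\<dots> \<le> \<delta> * (real (card G) * m)"
    using assms(6,7) \<open>0 \<le> \<delta>\<close> by (intro mult_left_mono mult_right_mono)
  also have "real (card G) * m \<le> sum c G"
    using sum_mono[of G "\<lambda>_. m" c] assms(10) by simp
  finally have "sum w S \<le> sum c S + \<delta> * sum c G"
    using \<open>0 \<le> \<delta>\<close> by (simp add: mult_left_mono)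
  moreover have "sum w G \<le> \<alpha> * sum c G"
    using sum_mono[of G w "\<lambda>j. \<alpha> * c j"] assms(11) by (simp add: sum_distrib_left)
  moreover have "0 \<le> sum c S" "0 \<le> sum c G"
    using assms(6,8,10) by (auto intro: sum_nonneg order_trans)
  moreover have "0 \<le> (\<alpha> + \<delta>) * sum c S"
    using assms(5) \<open>0 \<le> \<delta>\<close> \<open>0 \<le> sum c S\<close> by simp
  ultimately show ?thesis
    unfolding \<open>\<gamma> * (\<alpha> + 1) / (\<gamma> - 1) = \<alpha> + 1 + \<delta>\<close>
    using assms(1-3) by (simp add: sum.union_disjoint algebra_simps)
qed

lemma dloc_commute: "dloc loc i j = dloc loc j i"
  unfolding dloc_def by (rule dist_commute)

lemma dloc_triangle: "dloc loc i c \<le> dloc loc i j + dloc loc j c"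
  unfolding dloc_def by (rule dist_triangle)

lemma dloc_nonneg: "0 \<le> dloc loc i j"
  unfolding dloc_def by simp

lemma dq_eq_kth_smallest: "dq loc q i W = kth_smallest q (dloc loc i) W"
  unfolding dq_def kth_smallest_def ..

lemma dq_le_iff:
  assumes "finite W" "0 < q" "q \<le> card W"
  shows "dq loc q i W \<le> x \<longleftrightarrow> q \<le> card {c\<in>W. dloc loc i c \<le> x}"
  unfolding dq_eq_kth_smallest using assms by (rule kth_smallest_le_iff)

lemma card_le_dq:
  assumes "finite W" "0 < q" "q \<le> card W"
  shows "q \<le> card {c\<in>W. dloc loc i c \<le> dq loc q i W}"
  using dq_le_iff[OF assms] by blast

lemma dq_le_of_forall_dloc_le:
  assumes "finite W" "0 < q" "q \<le> card W" "\<And>c. c \<in> W \<Longrightarrow> dloc loc i c \<le> x"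
  shows "dq loc q i W \<le> x"
proof -
  have "{c\<in>W. dloc loc i c \<le> x} = W"
    using assms(4) by blast
  then show ?thesis
    using assms(3) by (simp add: dq_le_iff[OF assms(1-3)])
qed

lemma dq_nonneg:
  assumes "finite W" "0 < q" "q \<le> card W"
  shows "0 \<le> dq loc q i W"
proof -
  have "{c\<in>W. dloc loc i c \<le> dq loc q i W} \<noteq> {}"
    using card_le_dq[OF assms, of loc i] assms(2) by (metis card.empty not_le)
  then obtain c where "dloc loc i c \<le> dq loc q i W"
    by blast
  then show ?thesis
    using dloc_nonneg[of loc i c] by linarith
qed

lemma dq_le_dq_add_dloc:
  assumes "finite W" "0 < q" "q \<le> card W"
  shows "dq loc q i W \<le> dq loc q j W + dloc loc i j"
proof -
  have "dloc loc i c \<le> dq loc q j W + dloc loc i j" if "dloc loc j c \<le> dq loc q j W" for c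
    using dloc_triangle[of loc i c j] that by linarith
  then have "card {c\<in>W. dloc loc j c \<le> dq loc q j W}
      \<le> card {c\<in>W. dloc loc i c \<le> dq loc q j W + dloc loc i j}"
    using assms(1) by (intro card_mono) auto
  with card_le_dq[OF assms, of loc j] have "q \<le> card {c\<in>W. dloc loc i c \<le> dq loc q j W + dloc loc i j}"
    by linarith
  then show ?thesis
    by (simp add: dq_le_iff[OF assms])
qed

lemma dq_le_of_card_less_double:
  assumes "finite C'" "0 < q" "q \<le> card C'" "card C' < 2 * q" and "finite W" "q \<le> card W"
  shows "dq loc q i W \<le> dq loc q j W + dq loc q i C' + dq loc q j C'"
proof -
  let ?T = "\<lambda>x. {c\<in>C'. dloc loc x c \<le> dq loc q x C'}"
  have "?T i \<inter> ?T j \<noteq> {}"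
  proof
    assume "?T i \<inter> ?T j = {}"
    then have "card (?T i) + card (?T j) = card (?T i \<union> ?T j)"
      using assms(1) by (simp add: card_Un_disjoint)
    also have "\<dots> \<le> card C'"
      using assms(1) by (intro card_mono) auto
    finally have "card (?T i) + card (?T j) \<le> card C'" .
    then show False
      using card_le_dq[OF assms(1-3), of loc i] card_le_dq[OF assms(1-3), of loc j] assms(4) by linarith
  qed
  then obtain c where "dloc loc i c \<le> dq loc q i C'" "dloc loc j c \<le> dq loc q j C'"
    by blast
  then have "dloc loc i j \<le> dq loc q i C' + dq loc q j C'"
    using dloc_triangle[of loc i j c] dloc_commute[of loc c j] by linarith
  then show ?thesis
    using dq_le_dq_add_dloc[OF assms(5,2,6), of loc i j] by linarith
qed

lemma rq_le_iff:
  assumes "finite N" "N \<noteq> {}" "0 < q" "q \<le> k"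
  shows "rq loc N k q i \<le> x \<longleftrightarrow> real q * real (card N) / real k \<le> real (card {j\<in>N. dloc loc i j \<le> x})"
proof -
  define t where "t = real q * real (card N) / real k"
  have "0 < t"
    using assms by (simp add: t_def card_gt_0_iff)
  moreover have "t \<le> real (card N)"
    using assms by (simp add: t_def field_simps mult_right_mono)
  ultimately have "rq loc N k q i = kth_smallest (nat \<lceil>t\<rceil>) (dloc loc i) N"
    unfolding rq_def t_def[symmetric] by (rule Least_card_sublevel_eq_kth_smallest[OF assms(1)])
  with \<open>0 < t\<close> \<open>t \<le> real (card N)\<close> show ?thesis
    using assms(1) by (simp add: kth_smallest_le_iff t_def[symmetric])
qed

lemma ex_rq_le_double_dloc:
  assumes "finite N" "N \<noteq> {}" "0 < q" "q \<le> k"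
    and "A \<subseteq> N" "real q * real (card N) / real k \<le> real (card A)"
  shows "\<exists>i\<in>A. rq loc N k q i \<le> 2 * dloc loc i c"
proof -
  have "0 < real q * real (card N) / real k"
    using assms(1-4) by (simp add: card_gt_0_iff)
  with assms(6) have "A \<noteq> {}"
    by auto
  moreover have "finite A"
    using assms(1,5) finite_subset by blast
  ultimately obtain i where "i \<in> A" and farthest: "\<And>j. j \<in> A \<Longrightarrow> dloc loc j c \<le> dloc loc i c"
    using ex_is_arg_min_if_finite[of A "\<lambda>j. - dloc loc j c"] unfolding is_arg_min_linorder by auto
  have "dloc loc i j \<le> 2 * dloc loc i c" if "j \<in> A" for j
    using dloc_triangle[of loc i j c] dloc_commute[of loc c j] farthest[OF that] by linarith
  then have "A \<subseteq> {j\<in>N. dloc loc i j \<le> 2 * dloc loc i c}"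
    using assms(5) by auto
  then have "real (card A) \<le> real (card {j\<in>N. dloc loc i j \<le> 2 * dloc loc i c})"
    using assms(1) by (simp add: card_mono)
  then have "rq loc N k q i \<le> 2 * dloc loc i c"
    unfolding rq_le_iff[OF assms(1-4)] using assms(6) by linarith
  with \<open>i \<in> A\<close> show ?thesis
    by blast
qed

lemma in_core_blocking_card_less:
  assumes "in_core loc N C k q \<alpha> W" "N' \<subseteq> N" "C' \<subseteq> C" "q \<le> card C'" "card C' \<le> l"
    and "\<forall>i\<in>N'. \<alpha> * dq loc q i C' < dq loc q i W"
  shows "real (card N') < real l * real (card N) / real k"
  using assms unfolding in_core_def by (meson not_le)

lemma in_core_imp_individually_fair:
  assumes "finite N" "N \<noteq> {}" "N \<subseteq> C" "k \<le> card N" "0 < q" "q \<le> k" "0 \<le> \<alpha>"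
    and "finite W" "q \<le> card W" "in_core loc N C k q \<alpha> W"
  shows "individually_fair loc N k q (2 * \<alpha> + 1) W"
  unfolding individually_fair_def
proof
  fix i assume "i \<in> N"
  define r where "r = rq loc N k q i"
  define B where "B = {j\<in>N. dloc loc i j \<le> r}"
  have card_B: "real q * real (card N) / real k \<le> real (card B)"
    using rq_le_iff[OF assms(1,2,5,6), of loc i r] unfolding B_def r_def by simp
  moreover have "real q \<le> real q * real (card N) / real k"
    using assms(4-6) by (simp add: field_simps)
  ultimately have "q \<le> card B"
    by simp
  then obtain C' where C': "C' \<subseteq> B" "card C' = q" "finite C'"
    by (rule obtain_subset_with_card_n)
  have dq_C': "dq loc q j C' \<le> 2 * r" if "j \<in> B" for j
  proof (rule dq_le_of_forall_dloc_le[OF C'(3) assms(5)])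
    show "q \<le> card C'"
      using C'(2) by simp
    fix c assume "c \<in> C'"
    then have "dloc loc i c \<le> r" "dloc loc i j \<le> r"
      using \<open>j \<in> B\<close> C'(1) unfolding B_def by auto
    then show "dloc loc j c \<le> 2 * r"
      using dloc_triangle[of loc j c i] dloc_commute[of loc j i] by linarith
  qed
  show "dq loc q i W \<le> (2 * \<alpha> + 1) * rq loc N k q i"
  proof (rule ccontr)
    assume far: "\<not> ?thesis"
    have "\<alpha> * dq loc q j C' < dq loc q j W" if "j \<in> B" for j
    proof -
      have "\<alpha> * dq loc q j C' \<le> \<alpha> * (2 * r)"
        using dq_C'[OF that] assms(7) by (rule mult_left_mono)
      moreover have "dq loc q i W \<le> dq loc q j W + dloc loc i j"
        using dq_le_dq_add_dloc[OF assms(8,5,9)] .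
      ultimately show ?thesis
        using far that unfolding B_def r_def by (simp add: algebra_simps)
    qed
    then have "real (card B) < real q * real (card N) / real k"
      using in_core_blocking_card_less[OF assms(10), of B C' q] C' assms(3)
      unfolding B_def by auto
    with card_B show False
      by simp
  qed
qed

lemma in_core_imp_transferable_core_restr:
  assumes "finite N" "finite C" "0 < q" "0 \<le> \<alpha>" "1 < \<gamma>"
    and "finite W" "q \<le> card W" "in_core loc N C k q \<alpha> W"
  shows "in_transferable_core_restr loc N C k q \<gamma> (\<gamma> * (\<alpha> + 1) / (\<gamma> - 1)) W"
  unfolding in_transferable_core_restr_def
proof
  assume "\<exists>l N' C'. l < 2 * q \<and> N' \<subseteq> N \<and> \<gamma> * real l * real (card N) / real k \<le> real (card N') \<and>
    C' \<subseteq> C \<and> q \<le> card C' \<and> card C' \<le> l \<and>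
    \<gamma> * (\<alpha> + 1) / (\<gamma> - 1) * (\<Sum>i\<in>N'. dq loc q i C') < (\<Sum>i\<in>N'. dq loc q i W)"
  then obtain l N' C' where "l < 2 * q" "N' \<subseteq> N"
    and large: "\<gamma> * real l * real (card N) / real k \<le> real (card N')"
    and C': "C' \<subseteq> C" "q \<le> card C'" "card C' \<le> l"
    and gain: "\<gamma> * (\<alpha> + 1) / (\<gamma> - 1) * (\<Sum>i\<in>N'. dq loc q i C') < (\<Sum>i\<in>N'. dq loc q i W)"
    by blast
  have "finite N'" "finite C'"
    using \<open>N' \<subseteq> N\<close> C'(1) assms(1,2) finite_subset by auto
  define S where "S = {i\<in>N'. \<alpha> * dq loc q i C' < dq loc q i W}"
  define G where "G = N' - S"
  have "S \<subseteq> N'"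
    by (auto simp: S_def)
  then have N'_eq: "N' = S \<union> G" "S \<inter> G = {}" and "finite S" "finite G" "S \<subseteq> N"
    using \<open>finite N'\<close> \<open>N' \<subseteq> N\<close> unfolding G_def by (auto intro: finite_subset)
  have "real (card S) < real l * real (card N) / real k"
    by (rule in_core_blocking_card_less[OF assms(8) \<open>S \<subseteq> N\<close> C']) (simp add: S_def)
  then have "\<gamma> * real (card S) < \<gamma> * (real l * real (card N) / real k)"
    using assms(5) by (intro mult_strict_left_mono) auto
  also have "\<dots> \<le> real (card N')"
    using large by (simp add: mult.assoc)
  also have "\<dots> = real (card S) + real (card G)"
    using card_Un_disjoint[OF \<open>finite S\<close> \<open>finite G\<close> N'_eq(2)] N'_eq(1) by simp
  finally have "\<gamma> * real (card S) < real (card S) + real (card G)" .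
  then have card_G: "(\<gamma> - 1) * real (card S) < real (card G)"
    by (simp add: algebra_simps)
  moreover have "0 \<le> (\<gamma> - 1) * real (card S)"
    using assms(5) by simp
  ultimately have "G \<noteq> {}"
    by auto
  then obtain j0 where "j0 \<in> G" and j0_min: "\<And>j. j \<in> G \<Longrightarrow> dq loc q j0 C' \<le> dq loc q j C'"
    using ex_is_arg_min_if_finite[OF \<open>finite G\<close>, of "\<lambda>j. dq loc q j C'"]
    unfolding is_arg_min_linorder by blast
  have dq_nonneg_C': "0 \<le> dq loc q i C'" for i
    using dq_nonneg[OF \<open>finite C'\<close> assms(3) C'(2)] .
  have "card C' < 2 * q"
    using C'(3) \<open>l < 2 * q\<close> by linarith
  have G_bound: "dq loc q j W \<le> \<alpha> * dq loc q j C'" if "j \<in> G" for j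
    using that by (auto simp: G_def S_def)
  have "dq loc q i W \<le> dq loc q i C' + (\<alpha> + 1) * dq loc q j0 C'" for i
    using dq_le_of_card_less_double[OF \<open>finite C'\<close> assms(3) C'(2) \<open>card C' < 2 * q\<close> assms(6,7), of loc i j0]
      G_bound[OF \<open>j0 \<in> G\<close>] by (simp add: algebra_simps)
  then have "(\<Sum>i\<in>S \<union> G. dq loc q i W) \<le> \<gamma> * (\<alpha> + 1) / (\<gamma> - 1) * (\<Sum>i\<in>S \<union> G. dq loc q i C')"
    using \<open>finite S\<close> \<open>finite G\<close> N'_eq(2) assms(4,5) dq_nonneg_C' less_imp_le[OF card_G] j0_min G_bound
    by (intro sum_le_transfer_factor[where m = "dq loc q j0 C'"]) auto
  with gain show False
    unfolding N'_eq(1) by simp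
qed

lemma individually_fair_imp_in_core:
  assumes "finite N" "N \<noteq> {}" "finite C" "0 < q" "q \<le> k" "0 \<le> \<beta>"
    and "individually_fair loc N k q \<beta> W"
  shows "in_core loc N C k q (2 * \<beta>) W"
  unfolding in_core_def
proof
  assume "\<exists>l N' C'. N' \<subseteq> N \<and> real l * real (card N) / real k \<le> real (card N') \<and>
    C' \<subseteq> C \<and> q \<le> card C' \<and> card C' \<le> l \<and> (\<forall>i\<in>N'. 2 * \<beta> * dq loc q i C' < dq loc q i W)"
  then obtain l N' C' where "N' \<subseteq> N" and large: "real l * real (card N) / real k \<le> real (card N')"
    and C': "C' \<subseteq> C" "q \<le> card C'" "card C' \<le> l"
    and gain: "\<forall>i\<in>N'. 2 * \<beta> * dq loc q i C' < dq loc q i W"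
    by blast
  have "finite N'" "finite C'" "C' \<noteq> {}"
    using \<open>N' \<subseteq> N\<close> C' assms(1-4) finite_subset by auto
  define T where "T j = {c\<in>C'. dloc loc j c \<le> dq loc q j C'}" for j
  obtain c where "c \<in> C'" and popular: "q * card N' \<le> card C' * card {j\<in>N'. c \<in> T j}"
    using pigeonhole_incidence[OF \<open>finite N'\<close> \<open>finite C'\<close> \<open>C' \<noteq> {}\<close>, of T q]
      card_le_dq[OF \<open>finite C'\<close> assms(4) C'(2)] unfolding T_def by blast
  define A where "A = {j\<in>N'. c \<in> T j}"
  have "card C' * card A \<le> l * card A"
    using C'(3) by (rule mult_le_mono1)
  with popular have "q * card N' \<le> l * card A"
    unfolding A_def by linarith
  then have "real q * real (card N') \<le> real l * real (card A)"
    by (simp only: of_nat_mult[symmetric] of_nat_le_iff)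
  moreover have "real l * (real q * real (card N) / real k) \<le> real q * real (card N')"
    using mult_left_mono[OF large, of "real q"] by (simp add: ac_simps)
  ultimately have "real l * (real q * real (card N) / real k) \<le> real l * real (card A)"
    by linarith
  moreover have "0 < real l"
    using C' assms(4) by simp
  ultimately have "real q * real (card N) / real k \<le> real (card A)"
    by (rule mult_left_le_imp_le)
  moreover have "A \<subseteq> N"
    using \<open>N' \<subseteq> N\<close> by (auto simp: A_def)
  ultimately obtain i where "i \<in> A" and radius: "rq loc N k q i \<le> 2 * dloc loc i c"
    using ex_rq_le_double_dloc[OF assms(1,2,4,5)] by blast
  then have "i \<in> N'" "dloc loc i c \<le> dq loc q i C'"
    by (auto simp: A_def T_def)
  have "dq loc q i W \<le> \<beta> * rq loc N k q i"
    using assms(7) \<open>i \<in> N'\<close> \<open>N' \<subseteq> N\<close> unfolding individually_fair_def by blast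
  also have "\<dots> \<le> \<beta> * (2 * dq loc q i C')"
    using radius \<open>dloc loc i c \<le> dq loc q i C'\<close> assms(6) by (intro mult_left_mono) auto
  finally show False
    using bspec[OF gain \<open>i \<in> N'\<close>] by (simp add: ac_simps)
qed

theorem theorem8:
  fixes loc :: "'e \<Rightarrow> 'a::metric_space"
    and N C :: "'e set" and k q :: nat and \<alpha> :: real
  assumes "finite N" and "N \<noteq> {}" and "finite C"
    and "1 \<le> k" and "1 \<le> q" and "q \<le> k" and "\<alpha> \<ge> 1"
  shows "(\<forall>W. outcome C k W \<and> q \<le> card W \<and> in_core loc N C k q \<alpha> W \<longrightarrow>
            ((N \<subseteq> C \<and> k \<le> card N) \<longrightarrow> individually_fair loc N k q (2 * \<alpha> + 1) W) \<and>
            (\<forall>\<gamma>::real. \<gamma> > 1 \<longrightarrow>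
               in_transferable_core_restr loc N C k q \<gamma> (\<gamma> * (\<alpha> + 1) / (\<gamma> - 1)) W))
       \<and> ((N \<subseteq> C \<and> k \<le> card N) \<longrightarrow>
            (\<forall>(\<beta>::real) W. \<beta> \<ge> 0 \<and> outcome C k W \<and> q \<le> card W \<and>
                individually_fair loc N k q \<beta> W \<longrightarrow> in_core loc N C k q (2 * \<beta>) W))"
proof (intro conjI allI impI)
  have "0 < q" "0 \<le> \<alpha>"
    using assms(5,7) by simp_all
  fix W assume W: "outcome C k W \<and> q \<le> card W \<and> in_core loc N C k q \<alpha> W"
  then have "finite W"
    using assms(3) finite_subset unfolding outcome_def by blast
  show "individually_fair loc N k q (2 * \<alpha> + 1) W" if "N \<subseteq> C \<and> k \<le> card N"
    using in_core_imp_individually_fair[OF assms(1,2) _ _ \<open>0 < q\<close> assms(6) \<open>0 \<le> \<alpha>\<close> \<open>finite W\<close>] that W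
    by blast
  show "in_transferable_core_restr loc N C k q \<gamma> (\<gamma> * (\<alpha> + 1) / (\<gamma> - 1)) W" if "1 < \<gamma>" for \<gamma>
    using in_core_imp_transferable_core_restr[OF assms(1,3) \<open>0 < q\<close> \<open>0 \<le> \<alpha>\<close> that \<open>finite W\<close>] W
    by blast
next
  fix \<beta> :: real and W
  assume "\<beta> \<ge> 0 \<and> outcome C k W \<and> q \<le> card W \<and> individually_fair loc N k q \<beta> W"
  moreover have "0 < q"
    using assms(5) by simp
  ultimately show "in_core loc N C k q (2 * \<beta>) W"
    using individually_fair_imp_in_core[OF assms(1-3) _ assms(6)] by blast
qed

end
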